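(* If $A\subseteq\mathbb{N}$ is $D$-w.e.u., then there is a disjoint strong array intersecting $\overline{A}=\mathbb{N}\setminus A$; that is, there is a computable $h\colon\mathbb{N}\to\mathfrak{P}_{\mathrm{fin}}(\mathbb{N})$ with $h(n)\cap h(m)=\emptyset$ for all $n\neq m$ and such that for every $n$ there is $z\in h(n)$ with $z\notin A$.
   Context: $\varphi_0,\varphi_1,\ldots$ is a standard acceptable enumeration of the partial computable functions $\mathbb{N}\to\mathbb{N}$, $\mathbb{1}_A$ the characteristic function of $A$. $\mathfrak{P}_{\mathrm{fin}}(\mathbb{N})$ is the set of finite subsets of $\mathbb{N}$; $f\colon\mathbb{N}\to\mathfrak{P}_{\mathrm{fin}}(\mathbb{N})$ is computable if $e\mapsto$ (canonical index of $f(e)$) is computable. A recursively enumerable $A$ is $D$-w.e.u. if there is a computable $f\colon\mathbb{N}\to\mathfrak{P}_{\mathrm{fin}}(\mathbb{N})$ such that for all $e$: if $\varphi_e(z)$ is defined for all $z\in f(e)$, then there is $z\in f(e)$ with $\varphi_e(z)\neq\mathbb{1}_A(z)$. *)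

theory Defs
  imports Main "HOL-Library.Nat_Bijection"
begin

datatype recf = Zf | Sf | Proj nat | Comp recf "recf list" | Prim recf recf | Mu recf

inductive eval :: "recf \<Rightarrow> nat list \<Rightarrow> nat \<Rightarrow> bool" where
  ev_Z: "eval Zf xs 0"
| ev_S: "eval Sf (x # xs) (Suc x)"
| ev_Proj: "i < length xs \<Longrightarrow> eval (Proj i) xs (xs ! i)"
| ev_Comp: "list_all2 (\<lambda>g y. eval g xs y) gs ys \<Longrightarrow> eval f ys z \<Longrightarrow> eval (Comp f gs) xs z"
| ev_Prim0: "eval f xs y \<Longrightarrow> eval (Prim f g) (0 # xs) y"
| ev_PrimS: "eval (Prim f g) (n # xs) y \<Longrightarrow> eval g (n # y # xs) z \<Longrightarrow> eval (Prim f g) (Suc n # xs) z"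
| ev_Mu: "eval f (n # xs) 0 \<Longrightarrow> (\<forall>m<n. \<exists>y. eval f (m # xs) (Suc y)) \<Longrightarrow> eval (Mu f) xs n"

fun enc :: "recf \<Rightarrow> nat" where
  "enc Zf = prod_encode (0, 0)"
| "enc Sf = prod_encode (1, 0)"
| "enc (Proj i) = prod_encode (2, i)"
| "enc (Comp f gs) = prod_encode (3, prod_encode (enc f, list_encode (map enc gs)))"
| "enc (Prim f g) = prod_encode (4, prod_encode (enc f, enc g))"
| "enc (Mu f) = prod_encode (5, enc f)"

text \<open>The standard enumeration \<phi>_e of unary partial computable functions:
  \<phi>_e is the function computed by the program with code e (nowhere defined if
  e codes no program).\<close>

definition phi :: "nat \<Rightarrow> nat \<Rightarrow> nat option" where
  "phi e x = (if (\<exists>r. enc r = e) \<and> (\<exists>y. eval (THE r. enc r = e) [x] y)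
              then Some (THE y. eval (THE r. enc r = e) [x] y) else None)"

definition computable :: "(nat \<Rightarrow> nat) \<Rightarrow> bool" where
  "computable g \<longleftrightarrow> (\<exists>e. \<forall>x. phi e x = Some (g x))"

definition rec_enum :: "nat set \<Rightarrow> bool" where
  "rec_enum A \<longleftrightarrow> (\<exists>e. A = {x. phi e x \<noteq> None})"

definition ind :: "nat set \<Rightarrow> nat \<Rightarrow> nat" where
  "ind A z = (if z \<in> A then 1 else 0)"

definition canon :: "nat set \<Rightarrow> nat" where
  "canon D = (\<Sum>x\<in>D. 2 ^ x)"

definition fin_computable :: "(nat \<Rightarrow> nat set) \<Rightarrow> bool" where
  "fin_computable f \<longleftrightarrow> (\<forall>e. finite (f e)) \<and> computable (\<lambda>e. canon (f e))"

definition D_weu :: "nat set \<Rightarrow> bool" where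
  "D_weu A \<longleftrightarrow> rec_enum A \<and>
     (\<exists>f. fin_computable f \<and>
        (\<forall>e. (\<forall>z\<in>f e. phi e z \<noteq> None) \<longrightarrow> (\<exists>z\<in>f e. phi e z \<noteq> Some (ind A z))))"

end

theory Submission
  imports Defs
begin

text \<open>Let \<open>f\<close> witness that \<open>A\<close> is \<open>D\<close>-w.e.u. For a finite set \<open>D\<close> let \<open>e\<^sub>D\<close> be a program
  that outputs \<open>0\<close> on \<open>D\<close> and \<open>1\<close> elsewhere. If \<open>D = U - A\<close> for a finite \<open>U\<close>, then \<open>e\<^sub>D\<close>
  agrees with the characteristic function of \<open>A\<close> on \<open>U\<close>, so the point of \<open>f(e\<^sub>D)\<close> where
  \<open>e\<^sub>D\<close> is wrong lies outside \<open>U\<close>, where \<open>e\<^sub>D\<close> says \<open>1\<close>; hence it lies in the complement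
  of \<open>A\<close>. Having chosen the disjoint sets \<open>h(0), \<dots>, h(n-1)\<close> with union \<open>U\<close>, let \<open>h(n)\<close> be
  the set of points outside \<open>U\<close> lying in some \<open>f(e\<^sub>D)\<close> with \<open>D \<subseteq> U\<close>; as \<open>A\<close> is unknown
  we cannot pick \<open>D = U - A\<close>, but it is among these finitely many \<open>D\<close>.\<close>

section \<open>Programs and the enumeration \<open>phi\<close>\<close>

lemma enc_eq_iff [simp]: "enc r = enc s \<longleftrightarrow> r = s"
proof
  show "enc r = enc s \<Longrightarrow> r = s"
  proof (induction r arbitrary: s)
    case (Comp f gs)
    from Comp.prems obtain f' gs' where s: "s = Comp f' gs'" "enc f = enc f'" "map enc gs = map enc gs'"
      by (cases s) (simp_all add: list_encode_eq)
    have "gs = gs'" using s(3) Comp.IH(2)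
    proof (induction gs arbitrary: gs')
      case (Cons g gs)
      then show ?case by (cases gs') auto
    qed simp
    with s Comp.IH(1) show ?case by simp
  qed (case_tac s; simp)+
qed simp

inductive_cases eval_ZfE: "eval Zf xs y"
inductive_cases eval_SfE: "eval Sf xs y"
inductive_cases eval_ProjE: "eval (Proj i) xs y"
inductive_cases eval_CompE: "eval (Comp f gs) xs y"
inductive_cases eval_PrimE: "eval (Prim f g) xs y"
inductive_cases eval_MuE: "eval (Mu f) xs y"

lemma eval_deterministic: "eval r xs y \<Longrightarrow> eval r xs y' \<Longrightarrow> y = y'"
proof (induction arbitrary: y' rule: eval.induct)
  case (ev_Comp xs gs ys f z)
  from ev_Comp.prems obtain ys' where ys': "list_all2 (\<lambda>g y. eval g xs y) gs ys'" "eval f ys' y'"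
    by (rule eval_CompE) blast
  have "ys = ys'" using ev_Comp.IH(1) ys'(1)
    by (induction gs arbitrary: ys ys') (auto simp: list_all2_Cons1)
  with ev_Comp ys' show ?case by auto
next
  case (ev_Prim0 f xs y)
  from ev_Prim0.prems show ?case
    by (rule eval_PrimE) (use ev_Prim0.IH in auto)
next
  case (ev_PrimS f g n xs y z)
  from ev_PrimS.prems show ?case
    by (rule eval_PrimE) (use ev_PrimS.IH in auto)
next
  case (ev_Mu f n xs)
  from ev_Mu.prems obtain n' where "y' = n'" "eval f (n' # xs) 0" "\<forall>m<n'. \<exists>y. eval f (m # xs) (Suc y)"
    by (rule eval_MuE) blast
  with ev_Mu show ?case
    by (metis linorder_neqE_nat nat.distinct(1))
qed (auto elim: eval_ZfE eval_SfE eval_ProjE)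

definition computes :: "nat \<Rightarrow> recf \<Rightarrow> (nat list \<Rightarrow> nat) \<Rightarrow> bool" where
  "computes n r g \<longleftrightarrow> (\<forall>xs. length xs = n \<longrightarrow> eval r xs (g xs))"

lemma phi_enc_if_computes:
  assumes "computes 1 r g"
  shows "phi (enc r) x = Some (g [x])"
proof -
  have eval: "eval r [x] (g [x])" using assms by (simp add: computes_def)
  then have "(THE y. eval r [x] y) = g [x]" using eval_deterministic by blast
  with eval show ?thesis by (auto simp: phi_def)
qed

lemma computable_iff_computes: "computable g \<longleftrightarrow> (\<exists>r. computes 1 r (\<lambda>xs. g (xs!0)))"
proof
  assume "computable g"
  then obtain e where e: "\<And>x. phi e x = Some (g x)" by (auto simp: computable_def)
  then have "phi e 0 \<noteq> None" by simp
  then obtain r where r: "enc r = e" by (auto simp: phi_def split: if_splits)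
  have "eval r [x] (g x)" for x
  proof -
    have "(\<exists>y. eval r [x] y) \<and> (THE y. eval r [x] y) = g x"
      using e[of x] r by (auto simp: phi_def split: if_splits)
    then show ?thesis by (metis eval_deterministic theI)
  qed
  then have "computes 1 r (\<lambda>xs. g (xs!0))"
    by (auto simp: computes_def length_Suc_conv)
  then show "\<exists>r. computes 1 r (\<lambda>xs. g (xs!0))" ..
next
  assume "\<exists>r. computes 1 r (\<lambda>xs. g (xs!0))"
  then show "computable g"
    unfolding computable_def using phi_enc_if_computes by fastforce
qed

section \<open>Closure of \<open>computes\<close> under the Kleene operations\<close>

lemma computes_cong: "computes n r g \<Longrightarrow> (\<And>xs. length xs = n \<Longrightarrow> g xs = g' xs) \<Longrightarrow> computes n r g'"
  by (simp add: computes_def)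

lemma computes_Zf: "computes n Zf (\<lambda>_. 0)"
  by (simp add: computes_def ev_Z)

lemma computes_Sf: "computes 1 Sf (\<lambda>xs. Suc (xs!0))"
  by (auto simp: computes_def length_Suc_conv intro: ev_S)

lemma computes_Proj: "i < n \<Longrightarrow> computes n (Proj i) (\<lambda>xs. xs!i)"
  by (auto simp: computes_def intro: ev_Proj)

lemma computes_Comp:
  assumes "computes m f g" "length gs = m" "list_all2 (\<lambda>r h. computes n r h) gs hs"
    and "\<And>xs. length xs = n \<Longrightarrow> F xs = g (map (\<lambda>h. h xs) hs)"
  shows "computes n (Comp f gs) F"
  unfolding computes_def
proof (intro allI impI)
  fix xs :: "nat list"
  assume xs: "length xs = n"
  have "list_all2 (\<lambda>g y. eval g xs y) gs (map (\<lambda>h. h xs) hs)"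
    using assms(3) xs by (induction gs hs rule: list_all2_induct) (auto simp: computes_def)
  moreover have "length (map (\<lambda>h. h xs) hs) = m"
    using assms(2,3) by (simp add: list_all2_lengthD)
  ultimately show "eval (Comp f gs) xs (F xs)"
    using assms(1,4) xs by (auto simp: computes_def intro: ev_Comp)
qed

lemma computes_Comp1:
  "computes 1 f g \<Longrightarrow> computes n r\<^sub>1 h\<^sub>1 \<Longrightarrow> computes n (Comp f [r\<^sub>1]) (\<lambda>xs. g [h\<^sub>1 xs])"
  by (rule computes_Comp) auto

lemma computes_Comp2:
  "computes 2 f g \<Longrightarrow> computes n r\<^sub>1 h\<^sub>1 \<Longrightarrow> computes n r\<^sub>2 h\<^sub>2 \<Longrightarrow>
    computes n (Comp f [r\<^sub>1, r\<^sub>2]) (\<lambda>xs. g [h\<^sub>1 xs, h\<^sub>2 xs])"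
  by (rule computes_Comp[where m=2]) auto

lemma computes_Comp3:
  "computes 3 f g \<Longrightarrow> computes n r\<^sub>1 h\<^sub>1 \<Longrightarrow> computes n r\<^sub>2 h\<^sub>2 \<Longrightarrow> computes n r\<^sub>3 h\<^sub>3 \<Longrightarrow>
    computes n (Comp f [r\<^sub>1, r\<^sub>2, r\<^sub>3]) (\<lambda>xs. g [h\<^sub>1 xs, h\<^sub>2 xs, h\<^sub>3 xs])"
  by (rule computes_Comp[where m=3]) auto

text \<open>The arities \<open>m = n + 1\<close> and \<open>m' = n + 2\<close> are separate parameters so that the rule
  also applies to numerals.\<close>

lemma computes_Prim:
  assumes "computes n f g" "computes m' s h" "m = Suc n" "m' = Suc m"
    and "\<And>ys. length ys = n \<Longrightarrow> F (0 # ys) = g ys"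
    and "\<And>k ys. length ys = n \<Longrightarrow> F (Suc k # ys) = h (k # F (k # ys) # ys)"
  shows "computes m (Prim f s) F"
  unfolding computes_def
proof (intro allI impI)
  fix xs :: "nat list"
  assume "length xs = m"
  with assms(3) obtain k ys where xs: "xs = k # ys" "length ys = n"
    by (auto simp: length_Suc_conv)
  have "eval (Prim f s) (k # ys) (F (k # ys))"
  proof (induction k)
    case 0
    show ?case using assms(1,5) xs(2) by (auto simp: computes_def intro: ev_Prim0)
  next
    case (Suc k)
    have "eval s (k # F (k # ys) # ys) (h (k # F (k # ys) # ys))"
      using assms(2-4) xs(2) by (simp add: computes_def)
    with Suc assms(6) xs(2) show ?case by (auto intro: ev_PrimS)
  qed
  with xs show "eval (Prim f s) xs (F xs)" by simp
qed

section \<open>Some primitive recursive programs\<close>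

fun const_prog :: "nat \<Rightarrow> recf" where
  "const_prog 0 = Zf"
| "const_prog (Suc c) = Comp Sf [const_prog c]"

lemma computes_const_prog: "computes n (const_prog c) (\<lambda>_. c)"
  by (induction c) (auto intro: computes_Zf computes_cong[OF computes_Comp1[OF computes_Sf]])

definition "add_prog = Prim (Proj 0) (Comp Sf [Proj 1])"

lemma computes_add_prog: "computes 2 add_prog (\<lambda>xs. xs!0 + xs!1)"
  unfolding add_prog_def
  by (rule computes_Prim[OF computes_Proj computes_Comp1[OF computes_Sf computes_Proj], where n=1])
    auto

definition "triangle_prog = Prim Zf (Comp add_prog [Proj 1, Comp Sf [Proj 0]])"

lemma computes_triangle_prog: "computes 1 triangle_prog (\<lambda>xs. triangle (xs!0))"
  unfolding triangle_prog_def
  by (rule computes_Prim[OF computes_Zf computes_Comp2[OF computes_add_prog computes_Proj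
        computes_Comp1[OF computes_Sf computes_Proj]], where n=0])
    auto

definition "prod_encode_prog = Comp add_prog [Comp triangle_prog [add_prog], Proj 0]"

lemma computes_prod_encode_prog: "computes 2 prod_encode_prog (\<lambda>xs. prod_encode (xs!0, xs!1))"
  unfolding prod_encode_prog_def
  by (rule computes_cong[OF computes_Comp2[OF computes_add_prog
        computes_Comp1[OF computes_triangle_prog computes_add_prog] computes_Proj]])
    (auto simp: prod_encode_def)

definition "is_zero_prog = Prim (const_prog 1) (const_prog 0)"

lemma computes_is_zero_prog: "computes 1 is_zero_prog (\<lambda>xs. if xs!0 = 0 then 1 else 0)"
  unfolding is_zero_prog_def
  by (rule computes_Prim[OF computes_const_prog computes_const_prog, where n=0]) auto

definition "mod2_prog = Prim Zf (Comp is_zero_prog [Proj 1])"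

lemma computes_mod2_prog: "computes 1 mod2_prog (\<lambda>xs. xs!0 mod 2)"
  unfolding mod2_prog_def
  by (rule computes_Prim[OF computes_Zf computes_Comp1[OF computes_is_zero_prog computes_Proj], where n=0])
    (simp_all add: mod_Suc)

definition "div2_prog = Prim Zf (Comp add_prog [Proj 1, Comp mod2_prog [Proj 0]])"

lemma computes_div2_prog: "computes 1 div2_prog (\<lambda>xs. xs!0 div 2)"
  unfolding div2_prog_def
  by (rule computes_Prim[OF computes_Zf computes_Comp2[OF computes_add_prog computes_Proj
        computes_Comp1[OF computes_mod2_prog computes_Proj]], where n=0])
    (auto simp: div_Suc odd_iff_mod_2_eq_one mod_Suc)

definition "div_pow2_prog = Prim (Proj 0) (Comp div2_prog [Proj 1])"

lemma computes_div_pow2_prog: "computes 2 div_pow2_prog (\<lambda>xs. xs!1 div 2 ^ (xs!0))"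
  unfolding div_pow2_prog_def
  by (rule computes_Prim[OF computes_Proj computes_Comp1[OF computes_div2_prog computes_Proj], where n=1])
    (auto simp: power_Suc2 div_mult2_eq simp del: power_Suc)

definition "bit_prog = Comp mod2_prog [div_pow2_prog]"

lemma computes_bit_prog: "computes 2 bit_prog (\<lambda>xs. xs!1 div 2 ^ (xs!0) mod 2)"
  unfolding bit_prog_def
  by (rule computes_cong[OF computes_Comp1[OF computes_mod2_prog computes_div_pow2_prog]]) simp

definition "pow2_prog = Prim (const_prog 1) (Comp add_prog [Proj 1, Proj 1])"

lemma computes_pow2_prog: "computes 1 pow2_prog (\<lambda>xs. 2 ^ (xs!0))"
  unfolding pow2_prog_def
  by (rule computes_Prim[OF computes_const_prog computes_Comp2[OF computes_add_prog computes_Proj computes_Proj],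
        where n=0])
    auto

definition "if_zero_prog = Prim (Proj 0) (Proj 3)"

lemma computes_if_zero_prog: "computes 3 if_zero_prog (\<lambda>xs. if xs!0 = 0 then xs!1 else xs!2)"
  unfolding if_zero_prog_def
  by (rule computes_Prim[OF computes_Proj computes_Proj, where n=2]) auto

definition "sum_prog r = Prim (const_prog 0) (Comp add_prog [Proj 1, Comp r [Proj 0]])"

lemma computes_sum_prog: "computes 1 r g \<Longrightarrow> computes 1 (sum_prog r) (\<lambda>xs. \<Sum>t<xs!0. g [t])"
  unfolding sum_prog_def
  by (rule computes_Prim[OF computes_const_prog computes_Comp2[OF computes_add_prog computes_Proj
        computes_Comp1[OF _ computes_Proj]], where n=0])
    auto

definition "sum_prog2 r = Prim (const_prog 0) (Comp add_prog [Proj 1, Comp r [Proj 0, Proj 2]])"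

lemma computes_sum_prog2: "computes 2 r g \<Longrightarrow> computes 2 (sum_prog2 r) (\<lambda>xs. \<Sum>t<xs!0. g [t, xs!1])"
  unfolding sum_prog2_def
  by (rule computes_Prim[OF computes_const_prog computes_Comp2[OF computes_add_prog computes_Proj
        computes_Comp2[OF _ computes_Proj computes_Proj]], where n=1])
    auto

lemma mod2_div_pow2_eq_0_iff: "x div 2 ^ z mod 2 = 0 \<longleftrightarrow> z \<notin> set_decode x"
  by (simp add: set_decode_def even_iff_mod_2_eq_zero)

definition "not_mem_prog = Comp is_zero_prog [Comp bit_prog [Proj 1, Proj 0]]"

lemma computes_not_mem_prog: "computes 2 not_mem_prog (\<lambda>xs. if xs!1 \<in> set_decode (xs!0) then 0 else 1)"
  unfolding not_mem_prog_def
  by (rule computes_cong[OF computes_Comp1[OF computes_is_zero_prog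
        computes_Comp2[OF computes_bit_prog computes_Proj computes_Proj]]])
    (auto simp: mod2_div_pow2_eq_0_iff)

text \<open>\<open>test_prog t\<close> is the program \<open>e\<^sub>D\<close> for \<open>D = set_decode t\<close>.\<close>

definition test_prog :: "nat \<Rightarrow> recf" where
  "test_prog t = Comp not_mem_prog [const_prog t, Proj 0]"

lemma computes_test_prog: "computes 1 (test_prog t) (\<lambda>xs. if xs!0 \<in> set_decode t then 0 else 1)"
  unfolding test_prog_def
  by (rule computes_cong[OF computes_Comp2[OF computes_not_mem_prog computes_const_prog computes_Proj]])
    auto

lemma phi_test_prog: "phi (enc (test_prog t)) z = Some (if z \<in> set_decode t then 0 else 1)"
  using phi_enc_if_computes[OF computes_test_prog] by simp

text \<open>The codes are computed from the equations of \<open>enc\<close>, using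
  \<open>list_encode (x # xs) = Suc (prod_encode (x, list_encode xs))\<close>.\<close>

definition "const_code_prog =
  Prim (const_prog (enc Zf))
    (Comp prod_encode_prog [const_prog 3, Comp prod_encode_prog [const_prog (enc Sf),
      Comp Sf [Comp prod_encode_prog [Proj 1, const_prog 0]]]])"

lemma computes_const_code_prog: "computes 1 const_code_prog (\<lambda>xs. enc (const_prog (xs!0)))"
  unfolding const_code_prog_def
  by (rule computes_Prim[OF computes_const_prog computes_Comp2[OF computes_prod_encode_prog computes_const_prog
        computes_Comp2[OF computes_prod_encode_prog computes_const_prog computes_Comp1[OF computes_Sf
          computes_Comp2[OF computes_prod_encode_prog computes_Proj computes_const_prog]]]], where n=0])
    auto

definition "test_code_prog =
  Comp prod_encode_prog [const_prog 3, Comp prod_encode_prog [const_prog (enc not_mem_prog),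
    Comp Sf [Comp prod_encode_prog [const_code_prog,
      Comp Sf [Comp prod_encode_prog [const_prog (enc (Proj 0)), const_prog 0]]]]]]"

lemma computes_test_code_prog: "computes 1 test_code_prog (\<lambda>xs. enc (test_prog (xs!0)))"
  unfolding test_code_prog_def
  by (rule computes_cong[OF computes_Comp2[OF computes_prod_encode_prog computes_const_prog
        computes_Comp2[OF computes_prod_encode_prog computes_const_prog computes_Comp1[OF computes_Sf
          computes_Comp2[OF computes_prod_encode_prog computes_const_code_prog computes_Comp1[OF computes_Sf
            computes_Comp2[OF computes_prod_encode_prog computes_const_prog computes_const_prog]]]]]]])
    (auto simp: test_prog_def)

section \<open>The strong array\<close>

text \<open>\<open>block f H\<close> is the next member of the array once the set \<open>set_decode H\<close> has been
  used up; the subsets of \<open>set_decode H\<close> are among the \<open>set_decode t\<close> with \<open>t \<le> H\<close>.\<close>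

definition block :: "(nat \<Rightarrow> nat set) \<Rightarrow> nat \<Rightarrow> nat set" where
  "block f H = {x. x \<notin> set_decode H \<and> (\<exists>t\<le>H. x \<in> f (enc (test_prog t)))}"

fun used :: "(nat \<Rightarrow> nat set) \<Rightarrow> nat \<Rightarrow> nat set" where
  "used f 0 = {}"
| "used f (Suc n) = used f n \<union> block f (set_encode (used f n))"

definition strong_array :: "(nat \<Rightarrow> nat set) \<Rightarrow> nat \<Rightarrow> nat set" where
  "strong_array f n = block f (set_encode (used f n))"

lemma used_Suc_eq: "used f (Suc n) = used f n \<union> strong_array f n"
  by (simp add: strong_array_def)

lemma strong_array_subset_used: "k < n \<Longrightarrow> strong_array f k \<subseteq> used f n"
  by (induction n) (auto simp: strong_array_def less_Suc_eq)

lemma canon_eq_set_encode: "canon = set_encode"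
  by (simp add: fun_eq_iff canon_def set_encode_def)

lemma lt_set_encode:
  assumes "finite D" and "x \<in> D"
  shows "x < set_encode D"
proof -
  have "x < 2 ^ x" by (rule less_exp)
  also have "\<dots> \<le> set_encode D"
    unfolding set_encode_def using assms by (intro member_le_sum) simp_all
  finally show ?thesis .
qed

context
  fixes f :: "nat \<Rightarrow> nat set"
  assumes finite_f: "\<And>e. finite (f e)"
begin

lemma finite_block: "finite (block f H)"
  by (rule finite_subset[of _ "\<Union>t\<le>H. f (enc (test_prog t))"]) (auto simp: block_def finite_f)

lemma finite_used: "finite (used f n)"
  by (induction n) (simp_all add: finite_block)

lemma strong_array_disjoint_used: "strong_array f n \<inter> used f n = {}"
  by (auto simp: strong_array_def block_def finite_used)

lemma strong_array_disjoint:
  assumes "n \<noteq> m"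
  shows "strong_array f n \<inter> strong_array f m = {}"
proof -
  have "strong_array f k \<inter> strong_array f l = {}" if "k < l" for k l
    using strong_array_subset_used[OF that] strong_array_disjoint_used[of l] by blast
  with assms show ?thesis
    by (metis inf_commute linorder_neqE_nat)
qed

lemma set_encode_used_Suc:
  "set_encode (used f (Suc n)) = set_encode (used f n) + set_encode (strong_array f n)"
  unfolding used_Suc_eq set_encode_def
  using strong_array_disjoint_used finite_used finite_block
  by (simp add: sum.union_disjoint strong_array_def inf_commute)

lemma strong_array_meets_complement:
  assumes wrong: "\<And>e. \<forall>z\<in>f e. phi e z \<noteq> None \<Longrightarrow> \<exists>z\<in>f e. phi e z \<noteq> Some (ind A z)"
  shows "\<exists>z\<in>strong_array f n. z \<notin> A"
proof -
  let ?U = "used f n"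
  define t where "t = set_encode (?U - A)"
  have decode_t: "set_decode t = ?U - A"
    using finite_used by (simp add: t_def)
  have "t \<le> set_encode ?U"
    by (rule subset_decode_imp_le) (use decode_t finite_used in auto)
  obtain z where z: "z \<in> f (enc (test_prog t))" "phi (enc (test_prog t)) z \<noteq> Some (ind A z)"
    using wrong[of "enc (test_prog t)"] by (auto simp: phi_test_prog)
  then have "z \<notin> ?U" and "z \<notin> A"
    by (auto simp: phi_test_prog decode_t ind_def split: if_splits)
  moreover have "z \<in> strong_array f n"
    using z(1) \<open>z \<notin> ?U\<close> \<open>t \<le> set_encode ?U\<close> finite_used
    by (auto simp: strong_array_def block_def)
  ultimately show ?thesis by blast
qed

lemma mem_block_iff:
  "x \<in> block f H \<longleftrightarrow>
    H div 2 ^ x mod 2 = 0 \<and> (\<Sum>t<Suc H. set_encode (f (enc (test_prog t))) div 2 ^ x mod 2) \<noteq> 0"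
proof -
  have "(\<Sum>t<Suc H. set_encode (f (enc (test_prog t))) div 2 ^ x mod 2) \<noteq> 0 \<longleftrightarrow>
      (\<exists>t\<le>H. x \<in> f (enc (test_prog t)))"
    by (auto simp: mod2_div_pow2_eq_0_iff finite_f less_Suc_eq_le simp del: sum.lessThan_Suc)
  then show ?thesis by (simp add: block_def mod2_div_pow2_eq_0_iff)
qed

lemma block_subset_lessThan: "block f H \<subseteq> {..<\<Sum>t<Suc H. set_encode (f (enc (test_prog t)))}"
proof
  fix x
  assume "x \<in> block f H"
  then obtain t where t: "t \<le> H" "x \<in> f (enc (test_prog t))" by (auto simp: block_def)
  have "x < set_encode (f (enc (test_prog t)))" using lt_set_encode[OF finite_f t(2)] .
  also have "\<dots> \<le> (\<Sum>t<Suc H. set_encode (f (enc (test_prog t))))"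
    using t(1) by (intro member_le_sum) auto
  finally show "x \<in> {..<\<Sum>t<Suc H. set_encode (f (enc (test_prog t)))}" by simp
qed

lemma set_encode_block:
  "set_encode (block f H) =
    (\<Sum>x<\<Sum>t<Suc H. set_encode (f (enc (test_prog t))). if x \<in> block f H then 2 ^ x else 0)"
proof -
  let ?B = "\<Sum>t<Suc H. set_encode (f (enc (test_prog t)))"
  have "(\<Sum>x<?B. if x \<in> block f H then 2 ^ x else 0) = (\<Sum>x\<in>{..<?B} \<inter> block f H. (2::nat) ^ x)"
    by (rule sum.inter_restrict[symmetric]) simp
  also have "{..<?B} \<inter> block f H = block f H"
    using block_subset_lessThan by blast
  finally show ?thesis
    unfolding set_encode_def by (rule sym)
qed

end

section \<open>Computability of the strong array\<close>

definition "query_prog RF = Comp RF [test_code_prog]"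

definition "hits_prog RF = sum_prog2 (Comp bit_prog [Proj 1, Comp (query_prog RF) [Proj 0]])"

definition "block_term_prog RF =
  Comp if_zero_prog [Comp bit_prog [Proj 0, Proj 1],
    Comp if_zero_prog [Comp (hits_prog RF) [Comp Sf [Proj 1], Proj 0], const_prog 0, Comp pow2_prog [Proj 0]],
    const_prog 0]"

definition "block_prog RF =
  Comp (sum_prog2 (block_term_prog RF)) [Comp (sum_prog (query_prog RF)) [Comp Sf [Proj 0]], Proj 0]"

definition "used_prog RF = Prim Zf (Comp add_prog [Proj 1, Comp (block_prog RF) [Proj 1]])"

definition "strong_array_prog RF = Comp (block_prog RF) [used_prog RF]"

context
  fixes f :: "nat \<Rightarrow> nat set" and RF :: recf
  assumes finite_f: "\<And>e. finite (f e)"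
    and RF: "computes 1 RF (\<lambda>xs. set_encode (f (xs!0)))"
begin

lemma computes_query_prog: "computes 1 (query_prog RF) (\<lambda>xs. set_encode (f (enc (test_prog (xs!0)))))"
  unfolding query_prog_def
  by (rule computes_cong[OF computes_Comp1[OF RF computes_test_code_prog]]) simp

lemma computes_hits_prog:
  "computes 2 (hits_prog RF) (\<lambda>xs. \<Sum>t<xs!0. set_encode (f (enc (test_prog t))) div 2 ^ (xs!1) mod 2)"
  unfolding hits_prog_def
  by (rule computes_cong[OF computes_sum_prog2[OF computes_Comp2[OF computes_bit_prog computes_Proj
        computes_Comp1[OF computes_query_prog computes_Proj]]]])
    auto

lemma computes_block_term_prog:
  "computes 2 (block_term_prog RF) (\<lambda>xs. if xs!0 \<in> block f (xs!1) then 2 ^ (xs!0) else 0)"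
  unfolding block_term_prog_def
  by (rule computes_cong[OF computes_Comp3[OF computes_if_zero_prog
        computes_Comp2[OF computes_bit_prog computes_Proj computes_Proj]
        computes_Comp3[OF computes_if_zero_prog computes_Comp2[OF computes_hits_prog
            computes_Comp1[OF computes_Sf computes_Proj] computes_Proj]
          computes_const_prog computes_Comp1[OF computes_pow2_prog computes_Proj]]
        computes_const_prog]])
    (auto simp: mem_block_iff[OF finite_f])

lemma computes_block_prog: "computes 1 (block_prog RF) (\<lambda>xs. set_encode (block f (xs!0)))"
  unfolding block_prog_def
  by (rule computes_cong[OF computes_Comp2[OF computes_sum_prog2[OF computes_block_term_prog]
        computes_Comp1[OF computes_sum_prog[OF computes_query_prog]
          computes_Comp1[OF computes_Sf computes_Proj]] computes_Proj]])
    (simp_all add: set_encode_block[OF finite_f] cong: if_cong)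

lemma computes_used_prog: "computes 1 (used_prog RF) (\<lambda>xs. set_encode (used f (xs!0)))"
  unfolding used_prog_def
  by (rule computes_Prim[OF computes_Zf computes_Comp2[OF computes_add_prog computes_Proj
        computes_Comp1[OF computes_block_prog computes_Proj]], where n=0])
    (simp_all add: set_encode_used_Suc[OF finite_f] strong_array_def del: used.simps(2))

lemma computes_strong_array_prog:
  "computes 1 (strong_array_prog RF) (\<lambda>xs. set_encode (strong_array f (xs!0)))"
  unfolding strong_array_prog_def
  by (rule computes_cong[OF computes_Comp1[OF computes_block_prog computes_used_prog]])
    (simp add: strong_array_def)

end

lemma fin_computable_strong_array:
  assumes finite_f: "\<And>e. finite (f e)" and "computable (\<lambda>e. set_encode (f e))"
  shows "fin_computable (strong_array f)"
proof -
  from assms(2) obtain RF where RF: "computes 1 RF (\<lambda>xs. set_encode (f (xs!0)))"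
    by (auto simp: computable_iff_computes)
  have "computes 1 (strong_array_prog RF) (\<lambda>xs. set_encode (strong_array f (xs!0)))"
    using finite_f RF by (rule computes_strong_array_prog)
  then have "computable (\<lambda>n. set_encode (strong_array f n))"
    unfolding computable_iff_computes ..
  then show ?thesis
    by (simp add: fin_computable_def canon_eq_set_encode strong_array_def finite_block[OF finite_f])
qed

theorem mainTheorem10:
  fixes A :: "nat set"
  assumes "D_weu A"
  shows "\<exists>h. fin_computable h \<and> (\<forall>n m. n \<noteq> m \<longrightarrow> h n \<inter> h m = {}) \<and>
             (\<forall>n. \<exists>z\<in>h n. z \<notin> A)"
proof -
  from assms obtain f where f: "fin_computable f"
    and wrong: "\<And>e. \<forall>z\<in>f e. phi e z \<noteq> None \<Longrightarrow> \<exists>z\<in>f e. phi e z \<noteq> Some (ind A z)"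
    unfolding D_weu_def by blast
  from f have finite_f: "\<And>e. finite (f e)" and "computable (\<lambda>e. set_encode (f e))"
    by (simp_all add: fin_computable_def canon_eq_set_encode)
  then have "fin_computable (strong_array f)"
    by (rule fin_computable_strong_array)
  moreover have "\<forall>n m. n \<noteq> m \<longrightarrow> strong_array f n \<inter> strong_array f m = {}"
    using strong_array_disjoint[OF finite_f] by simp
  moreover have "\<forall>n. \<exists>z\<in>strong_array f n. z \<notin> A"
    using strong_array_meets_complement[OF finite_f wrong] by simp
  ultimately show ?thesis by blast
qed

end
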